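(* Let $G_{\|v_0}$ be a well-initialized prefix-independent game, let $\epsilon\ge0$ and let $\bar\sigma$ be an $\epsilon$-SPE in $G_{\|v_0}$. Then there exists an $\epsilon$-fixed point $\lambda$ of the negotiation function such that for every history $hv$ of $G_{\|v_0}$, the play $\langle\bar\sigma_{\|hv}\rangle_v$ is $\lambda$-consistent.
   Context: A game is a tuple $G=(\Pi,V,(V_i)_{i\in\Pi},E,\mu)$ where $\Pi$ is a finite set of players, $(V,E)$ is a finite directed graph in which every vertex has at least one outgoing edge, $(V_i)_{i\in\Pi}$ is a partition of $V$, and $\mu:V^\omega\to\mathbb{R}^\Pi$ is the outcome function. Plays, histories, strategies, profiles, compatibility and $\langle\bar\sigma\rangle_v$ are as usual; $G_{\|v_0}$ is $G$ initialized at $v_0$ and is well-initialized if every vertex is reachable from $v_0$ in $(V,E)$; $-i$ denotes $\Pi\setminus\{i\}$; $\bar\sigma_{\|hv}$ is the profile in $G_{\|v}$ with $\sigma_{j\|hv}(h')=\sigma_j(hh')$. $G$ is prefix-independent if $\mu(h\rho)=\mu(\rho)$ for every history $h$ and play $\rho$. A profile $\bar\sigma$ in $G_{\|v_0}$ is an $\epsilon$-SPE if for every history $hv$ of $G_{\|v_0}$, every player $i$ and strategy $\sigma'_i$, $\mu_i(h\langle\bar\sigma_{-i\|hv},\sigma'_{i\|hv}\rangle_v)\le\mu_i(h\langle\bar\sigma_{\|hv}\rangle_v)+\epsilon$. A requirement is a map $\lambda:V\to\mathbb{R}\cup\{\pm\infty\}$. A play $\rho$ is $\lambda$-consistent if for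 every $i\in\Pi$ and $n$ with $\rho_n\in V_i$, $\mu_i(\rho_n\rho_{n+1}\cdots)\ge\lambda(\rho_n)$. $\lambda\mathrm{Rat}_i(v)$ is the set of profiles $\bar\sigma_{-i}$ in $G_{\|v}$ for which there exists $\sigma_i$ such that for every history $hw$ from $v$ compatible with $\bar\sigma_{-i}$, $\langle\bar\sigma_{\|hw}\rangle_w$ is $\lambda$-consistent. For $i\in\Pi$, $v\in V_i$: $\mathrm{nego}(\lambda)(v)=\inf_{\bar\sigma_{-i}\in\lambda\mathrm{Rat}_i(v)}\sup_{\sigma_i}\mu_i(\langle\bar\sigma_{-i},\sigma_i\rangle_v)$, $\inf\emptyset=+\infty$. $\lambda$ is an $\epsilon$-fixed point of $\mathrm{nego}$ if $\lambda(v)-\epsilon\le\mathrm{nego}(\lambda)(v)\le\lambda(v)+\epsilon$ for all $v$ (with $\pm\infty\pm\epsilon=\pm\infty$). *)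

theory Defs
  imports Complex_Main "HOL-Library.Extended_Real"
begin

text \<open>
  A game is given by: a set of players PI, a set of vertices V, an edge relation E,
  an owner map own (vertex v belongs to V_i iff own v = i; this encodes the partition
  (V_i)_{i in PI}), and an outcome function mu mapping infinite vertex sequences to
  payoff vectors (a real for each player).
\<close>

definition game :: "'p set \<Rightarrow> 'v set \<Rightarrow> ('v \<times> 'v) set \<Rightarrow> ('v \<Rightarrow> 'p)
    \<Rightarrow> ((nat \<Rightarrow> 'v) \<Rightarrow> 'p \<Rightarrow> real) \<Rightarrow> bool" where
  "game PI V E own mu \<longleftrightarrow> finite PI \<and> finite V \<and> E \<subseteq> V \<times> V
     \<and> (\<forall>v\<in>V. \<exists>w. (v, w) \<in> E) \<and> (\<forall>v\<in>V. own v \<in> PI)"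

definition is_path :: "('v \<times> 'v) set \<Rightarrow> 'v list \<Rightarrow> bool" where
  "is_path E h \<longleftrightarrow> h \<noteq> [] \<and> (\<forall>k. Suc k < length h \<longrightarrow> (h ! k, h ! Suc k) \<in> E)"

definition hist_from :: "('v \<times> 'v) set \<Rightarrow> 'v \<Rightarrow> 'v list \<Rightarrow> bool" where
  "hist_from E v h \<longleftrightarrow> is_path E h \<and> hd h = v"

definition is_play :: "('v \<times> 'v) set \<Rightarrow> (nat \<Rightarrow> 'v) \<Rightarrow> bool" where
  "is_play E \<rho> \<longleftrightarrow> (\<forall>n. (\<rho> n, \<rho> (Suc n)) \<in> E)"

definition conc :: "'v list \<Rightarrow> (nat \<Rightarrow> 'v) \<Rightarrow> nat \<Rightarrow> 'v" where
  "conc h \<rho> n = (if n < length h then h ! n else \<rho> (n - length h))"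

definition suffix :: "(nat \<Rightarrow> 'v) \<Rightarrow> nat \<Rightarrow> nat \<Rightarrow> 'v" where
  "suffix \<rho> n = (\<lambda>k. \<rho> (k + n))"

definition prefix_independent :: "'v set \<Rightarrow> ('v \<times> 'v) set \<Rightarrow> ((nat \<Rightarrow> 'v) \<Rightarrow> 'p \<Rightarrow> real) \<Rightarrow> bool" where
  "prefix_independent V E mu \<longleftrightarrow>
     (\<forall>h \<rho>. set h \<subseteq> V \<longrightarrow> is_path E h \<longrightarrow> is_play E \<rho> \<longrightarrow> mu (conc h \<rho>) = mu \<rho>)"

definition well_initialized :: "'v set \<Rightarrow> ('v \<times> 'v) set \<Rightarrow> 'v \<Rightarrow> bool" where
  "well_initialized V E v0 \<longleftrightarrow> v0 \<in> V \<and> (\<forall>v\<in>V. (v0, v) \<in> E\<^sup>*)"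

definition is_strategy :: "('v \<times> 'v) set \<Rightarrow> ('v \<Rightarrow> 'p) \<Rightarrow> 'p \<Rightarrow> 'v \<Rightarrow> ('v list \<Rightarrow> 'v) \<Rightarrow> bool" where
  "is_strategy E own i v \<sigma> \<longleftrightarrow>
     (\<forall>h. hist_from E v h \<longrightarrow> own (last h) = i \<longrightarrow> (last h, \<sigma> h) \<in> E)"

definition is_profile :: "'p set \<Rightarrow> ('v \<times> 'v) set \<Rightarrow> ('v \<Rightarrow> 'p) \<Rightarrow> 'v
    \<Rightarrow> ('p \<Rightarrow> 'v list \<Rightarrow> 'v) \<Rightarrow> bool" where
  "is_profile PI E own v \<sigma> \<longleftrightarrow> (\<forall>i\<in>PI. is_strategy E own i v (\<sigma> i))"

text \<open>A partial profile (sigma_{-i}): strategies for all players except i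
  (the component at i is irrelevant and never used).\<close>
definition is_profile_except :: "'p set \<Rightarrow> ('v \<times> 'v) set \<Rightarrow> ('v \<Rightarrow> 'p) \<Rightarrow> 'p \<Rightarrow> 'v
    \<Rightarrow> ('p \<Rightarrow> 'v list \<Rightarrow> 'v) \<Rightarrow> bool" where
  "is_profile_except PI E own i v \<sigma> \<longleftrightarrow> (\<forall>j\<in>PI - {i}. is_strategy E own j v (\<sigma> j))"

primrec out_hist :: "('v \<Rightarrow> 'p) \<Rightarrow> ('p \<Rightarrow> 'v list \<Rightarrow> 'v) \<Rightarrow> 'v \<Rightarrow> nat \<Rightarrow> 'v list" where
  "out_hist own \<sigma> v 0 = [v]"
| "out_hist own \<sigma> v (Suc n) =
     out_hist own \<sigma> v n @ [\<sigma> (own (last (out_hist own \<sigma> v n))) (out_hist own \<sigma> v n)]"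

definition outcome :: "('v \<Rightarrow> 'p) \<Rightarrow> ('p \<Rightarrow> 'v list \<Rightarrow> 'v) \<Rightarrow> 'v \<Rightarrow> nat \<Rightarrow> 'v" where
  "outcome own \<sigma> v n = last (out_hist own \<sigma> v n)"

text \<open>sigma_{|hv}: the profile with sigma_{j|hv}(h') = sigma_j(h h'); here h is the
  history hv without its last vertex.\<close>
definition shift :: "('p \<Rightarrow> 'v list \<Rightarrow> 'v) \<Rightarrow> 'v list \<Rightarrow> 'p \<Rightarrow> 'v list \<Rightarrow> 'v" where
  "shift \<sigma> h = (\<lambda>j h'. \<sigma> j (h @ h'))"

definition is_eps_SPE :: "'p set \<Rightarrow> ('v \<times> 'v) set \<Rightarrow> ('v \<Rightarrow> 'p)
    \<Rightarrow> ((nat \<Rightarrow> 'v) \<Rightarrow> 'p \<Rightarrow> real) \<Rightarrow> 'v \<Rightarrow> real \<Rightarrow> ('p \<Rightarrow> 'v list \<Rightarrow> 'v) \<Rightarrow> bool" where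
  "is_eps_SPE PI E own mu v0 \<epsilon> \<sigma> \<longleftrightarrow> is_profile PI E own v0 \<sigma> \<and>
     (\<forall>hv i \<sigma>'. hist_from E v0 hv \<longrightarrow> i \<in> PI \<longrightarrow> is_strategy E own i v0 \<sigma>' \<longrightarrow>
        mu (conc (butlast hv) (outcome own (shift (\<sigma>(i := \<sigma>')) (butlast hv)) (last hv))) i
        \<le> mu (conc (butlast hv) (outcome own (shift \<sigma> (butlast hv)) (last hv))) i + \<epsilon>)"

definition consistent :: "'p set \<Rightarrow> ('v \<Rightarrow> 'p) \<Rightarrow> ((nat \<Rightarrow> 'v) \<Rightarrow> 'p \<Rightarrow> real)
    \<Rightarrow> ('v \<Rightarrow> ereal) \<Rightarrow> (nat \<Rightarrow> 'v) \<Rightarrow> bool" where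
  "consistent PI own mu lam \<rho> \<longleftrightarrow>
     (\<forall>i\<in>PI. \<forall>n. own (\<rho> n) = i \<longrightarrow> ereal (mu (suffix \<rho> n) i) \<ge> lam (\<rho> n))"

definition compatible_except :: "('v \<Rightarrow> 'p) \<Rightarrow> 'p \<Rightarrow> ('p \<Rightarrow> 'v list \<Rightarrow> 'v) \<Rightarrow> 'v list \<Rightarrow> bool" where
  "compatible_except own i \<tau> h \<longleftrightarrow>
     (\<forall>k. Suc k < length h \<longrightarrow> own (h ! k) \<noteq> i \<longrightarrow> h ! Suc k = \<tau> (own (h ! k)) (take (Suc k) h))"

definition lamRat :: "'p set \<Rightarrow> ('v \<times> 'v) set \<Rightarrow> ('v \<Rightarrow> 'p) \<Rightarrow> ((nat \<Rightarrow> 'v) \<Rightarrow> 'p \<Rightarrow> real)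
    \<Rightarrow> ('v \<Rightarrow> ereal) \<Rightarrow> 'p \<Rightarrow> 'v \<Rightarrow> ('p \<Rightarrow> 'v list \<Rightarrow> 'v) set" where
  "lamRat PI E own mu lam i v = {\<tau>. is_profile_except PI E own i v \<tau> \<and>
     (\<exists>\<sigma>i. is_strategy E own i v \<sigma>i \<and>
        (\<forall>hw. hist_from E v hw \<longrightarrow> compatible_except own i \<tau> hw \<longrightarrow>
           consistent PI own mu lam
             (outcome own (shift (\<tau>(i := \<sigma>i)) (butlast hw)) (last hw))))}"

definition nego :: "'p set \<Rightarrow> ('v \<times> 'v) set \<Rightarrow> ('v \<Rightarrow> 'p) \<Rightarrow> ((nat \<Rightarrow> 'v) \<Rightarrow> 'p \<Rightarrow> real)
    \<Rightarrow> ('v \<Rightarrow> ereal) \<Rightarrow> 'v \<Rightarrow> ereal" where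
  "nego PI E own mu lam v = (let i = own v in
     (INF \<tau>\<in>lamRat PI E own mu lam i v.
        (SUP \<sigma>i\<in>{\<sigma>i. is_strategy E own i v \<sigma>i}.
           ereal (mu (outcome own (\<tau>(i := \<sigma>i)) v) i))))"

definition eps_fixed_point :: "'p set \<Rightarrow> 'v set \<Rightarrow> ('v \<times> 'v) set \<Rightarrow> ('v \<Rightarrow> 'p)
    \<Rightarrow> ((nat \<Rightarrow> 'v) \<Rightarrow> 'p \<Rightarrow> real) \<Rightarrow> real \<Rightarrow> ('v \<Rightarrow> ereal) \<Rightarrow> bool" where
  "eps_fixed_point PI V E own mu \<epsilon> lam \<longleftrightarrow>
     (\<forall>v\<in>V. lam v - ereal \<epsilon> \<le> nego PI E own mu lam v \<and> nego PI E own mu lam v \<le> lam v + ereal \<epsilon>)"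

end

theory Submission
  imports Defs
begin

text \<open>
  Take as requirement at v the worst payoff that the owner of v obtains, in the subgames
  of the \<epsilon>-SPE \<sigma> starting in v:
  \<lambda>(v) = inf over histories hv of \<mu>_own(v)(\<langle>\<sigma>|hv\<rangle>_v).
  Every suffix of a subgame outcome is again a subgame outcome, so all these outcomes are
  \<lambda>-consistent. Consequently, in the negotiation at v, the environment may answer with
  \<sigma>_-i|hv. A deviation of player i in the subgame after hv is a deviation from \<sigma> in
  the whole game, and by prefix independence its gain is measured in the subgame alone;
  so it is at most \<epsilon>, which gives nego(\<lambda>)(v) \<le> \<lambda>(v) + \<epsilon>. The bound
  \<lambda>(v) \<le> nego(\<lambda>)(v) holds for every requirement, since a \<lambda>-consistent play from v
  gives its first player at least \<lambda>(v).
\<close>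

lemma shift_shift: "shift (shift \<sigma> a) b = shift \<sigma> (a @ b)"
  by (simp add: shift_def)

lemma shift_Nil [simp]: "shift \<sigma> [] = \<sigma>"
  by (simp add: shift_def)

lemma conc_Nil: "conc [] \<rho> = \<rho>"
  by (simp add: conc_def fun_eq_iff)

lemma is_path_not_Nil: "is_path E h \<Longrightarrow> h \<noteq> []"
  by (simp add: is_path_def)

lemma hist_from_not_Nil: "hist_from E v h \<Longrightarrow> h \<noteq> []"
  by (simp add: hist_from_def is_path_def)

lemma hist_from_singleton: "hist_from E v [v]"
  by (simp add: hist_from_def is_path_def)

lemma is_path_append:
  assumes "is_path E (a @ [w])" "is_path E g" "hd g = w"
  shows "is_path E (a @ g)"
proof -
  have g: "g \<noteq> []" and g0: "g ! 0 = w"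
    using assms(2,3) by (auto simp: is_path_def hd_conv_nth)
  have "((a @ g) ! k, (a @ g) ! Suc k) \<in> E" if "Suc k < length (a @ g)" for k
  proof -
    consider "Suc k < length a" | "Suc k = length a" | "length a \<le> k" by linarith
    then show ?thesis
    proof cases
      case 1
      then have "((a @ [w]) ! k, (a @ [w]) ! Suc k) \<in> E" using assms(1) by (simp add: is_path_def)
      with 1 show ?thesis by (simp add: nth_append)
    next
      case 2
      then have "((a @ [w]) ! k, (a @ [w]) ! Suc k) \<in> E"
        using assms(1) unfolding is_path_def by (metis length_append_singleton lessI)
      with 2 g0 show ?thesis by (simp add: nth_append)
    next
      case 3
      then have "(g ! (k - length a), g ! Suc (k - length a)) \<in> E"
        using assms(2) that by (simp add: is_path_def)
      with 3 show ?thesis by (simp add: nth_append Suc_diff_le)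
    qed
  qed
  then show ?thesis using g by (simp add: is_path_def)
qed

lemma is_path_snoc:
  assumes "is_path E h" "(last h, x) \<in> E"
  shows "is_path E (h @ [x])"
proof -
  have h: "h \<noteq> []" using assms(1) by (rule is_path_not_Nil)
  have "is_path E [last h, x]" using assms(2) by (simp add: is_path_def less_Suc_eq)
  then have "is_path E (butlast h @ [last h, x])"
    using is_path_append[of E "butlast h" "last h"] h assms(1) by simp
  then show ?thesis using h by (metis append_butlast_last_id append_Cons append_assoc append_Nil)
qed

lemma is_path_subset:
  assumes "is_path E h" "hd h \<in> V" "E \<subseteq> V \<times> V"
  shows "set h \<subseteq> V"
proof
  fix x assume "x \<in> set h"
  then obtain k where k: "k < length h" "h ! k = x" by (auto simp: in_set_conv_nth)
  show "x \<in> V"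
  proof (cases k)
    case 0
    then show ?thesis using k assms by (simp add: is_path_def hd_conv_nth)
  next
    case (Suc k')
    then have "(h ! k', h ! k) \<in> E" using k assms(1) unfolding is_path_def by blast
    then show ?thesis using assms(3) k by auto
  qed
qed

lemma is_path_drop: "is_path E h \<Longrightarrow> k < length h \<Longrightarrow> is_path E (drop k h)"
  by (auto simp: is_path_def)

lemma is_path_butlast: "is_path E h \<Longrightarrow> butlast h \<noteq> [] \<Longrightarrow> is_path E (butlast h)"
  by (auto simp: is_path_def nth_butlast)

lemma hist_from_append:
  assumes "hist_from E v0 hv" "hist_from E (last hv) g"
  shows "hist_from E v0 (butlast hv @ g)"
proof -
  have hv: "hv \<noteq> []" and g: "g \<noteq> []"
    using assms by (auto dest: hist_from_not_Nil)
  have "is_path E (butlast hv @ [last hv])" using assms(1) hv by (simp add: hist_from_def)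
  then have "is_path E (butlast hv @ g)"
    using is_path_append assms(2) by (fastforce simp: hist_from_def)
  moreover have "hd (butlast hv @ g) = hd (butlast hv @ [last hv])"
    using g assms(2) by (cases "butlast hv") (auto simp: hist_from_def)
  ultimately show ?thesis using assms(1) hv by (simp add: hist_from_def)
qed

lemma hist_from_last_in:
  assumes "game PI V E own mu" "v0 \<in> V" "hist_from E v0 hv"
  shows "last hv \<in> V"
proof -
  have "set hv \<subseteq> V"
    using assms is_path_subset[of E hv V] by (auto simp: game_def hist_from_def)
  moreover have "hv \<noteq> []" using assms(3) by (rule hist_from_not_Nil)
  ultimately show ?thesis by auto
qed

lemma prefix_independent_butlast:
  assumes "prefix_independent V E mu" "game PI V E own mu" "v0 \<in> V"
    and "hist_from E v0 hv" "is_play E \<rho>"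
  shows "mu (conc (butlast hv) \<rho>) = mu \<rho>"
proof (cases "butlast hv = []")
  case True
  then show ?thesis by (simp add: conc_Nil)
next
  case False
  have "is_path E (butlast hv)"
    using is_path_butlast False assms(4) by (auto simp: hist_from_def)
  moreover have "set (butlast hv) \<subseteq> V"
    using assms(2-4) is_path_subset[of E hv V]
    by (auto simp: game_def hist_from_def dest: in_set_butlastD)
  ultimately show ?thesis using assms(1,5) unfolding prefix_independent_def by blast
qed

lemma length_out_hist [simp]: "length (out_hist own \<tau> v n) = Suc n"
  by (induction n) auto

lemma out_hist_not_Nil [simp]: "out_hist own \<tau> v n \<noteq> []"
  by (induction n) auto

lemma hd_out_hist [simp]: "hd (out_hist own \<tau> v n) = v"
  by (induction n) auto

lemma suffix_0 [simp]: "suffix \<rho> 0 = \<rho>"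
  by (simp add: suffix_def)

lemma outcome_0 [simp]: "outcome own \<tau> v 0 = v"
  by (simp add: outcome_def)

lemma out_hist_add:
  "out_hist own \<tau> w (n + m) = butlast (out_hist own \<tau> w n) @
     out_hist own (shift \<tau> (butlast (out_hist own \<tau> w n))) (last (out_hist own \<tau> w n)) m"
  by (induction m) (simp_all add: shift_def)

lemma suffix_outcome:
  "suffix (outcome own \<tau> w) n =
   outcome own (shift \<tau> (butlast (out_hist own \<tau> w n))) (outcome own \<tau> w n)"
  using out_hist_add[of own \<tau> w n]
  by (auto simp: suffix_def outcome_def add.commute fun_eq_iff)

lemma outcome_cong:
  assumes "\<And>j h. h \<noteq> [] \<Longrightarrow> hd h = v \<Longrightarrow> \<tau> j h = \<tau>' j h"
  shows "outcome own \<tau> v = outcome own \<tau>' v"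
proof -
  have "out_hist own \<tau> v n = out_hist own \<tau>' v n" for n
    by (induction n) (auto simp: assms)
  then show ?thesis by (simp add: outcome_def fun_eq_iff)
qed

lemma out_hist_hist_from:
  assumes "game PI V E own mu" "v \<in> V" "is_profile PI E own v \<tau>"
  shows "hist_from E v (out_hist own \<tau> v n)"
proof (induction n)
  case 0
  show ?case by (simp add: hist_from_singleton)
next
  case (Suc n)
  let ?h = "out_hist own \<tau> v n"
  have "last ?h \<in> V" using hist_from_last_in[OF assms(1,2) Suc] .
  then have "own (last ?h) \<in> PI" using assms(1) by (auto simp: game_def)
  then have "(last ?h, \<tau> (own (last ?h)) ?h) \<in> E"
    using assms(3) Suc by (auto simp: is_profile_def is_strategy_def)
  then have "is_path E (?h @ [\<tau> (own (last ?h)) ?h])"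
    using Suc by (intro is_path_snoc) (simp_all add: hist_from_def)
  then show ?case using Suc by (simp add: hist_from_def)
qed

lemma outcome_is_play:
  assumes "game PI V E own mu" "v \<in> V" "is_profile PI E own v \<tau>"
  shows "is_play E (outcome own \<tau> v)"
  unfolding is_play_def
proof
  fix n
  let ?h = "out_hist own \<tau> v (Suc n)"
  have "is_path E ?h" using out_hist_hist_from[OF assms, of "Suc n"] unfolding hist_from_def ..
  then have "(?h ! n, ?h ! Suc n) \<in> E" by (simp add: is_path_def)
  moreover have "out_hist own \<tau> v n ! n = last (out_hist own \<tau> v n)"
    by (simp add: last_conv_nth)
  ultimately show "(outcome own \<tau> v n, outcome own \<tau> v (Suc n)) \<in> E"
    by (simp add: outcome_def nth_append)
qed

lemma is_profile_shift:
  assumes "hist_from E v0 hv" "is_profile PI E own v0 \<sigma>"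
  shows "is_profile PI E own (last hv) (shift \<sigma> (butlast hv))"
  unfolding is_profile_def is_strategy_def
proof (intro ballI allI impI)
  fix j h assume j: "j \<in> PI" and h: "hist_from E (last hv) h" and "own (last h) = j"
  moreover have "last (butlast hv @ h) = last h" using hist_from_not_Nil[OF h] by simp
  ultimately have "(last h, \<sigma> j (butlast hv @ h)) \<in> E"
    using hist_from_append[OF assms(1) h] assms(2) unfolding is_profile_def is_strategy_def
    by metis
  then show "(last h, shift \<sigma> (butlast hv) j h) \<in> E" by (simp add: shift_def)
qed

text \<open>Histories extending hv are passed to \<sigma>i with the prefix butlast hv removed, so that
  \<sigma>i only needs to be a strategy from last hv.\<close>
definition graft :: "'v list \<Rightarrow> ('v list \<Rightarrow> 'v) \<Rightarrow> ('v list \<Rightarrow> 'v) \<Rightarrow> 'v list \<Rightarrow> 'v" where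
  "graft hv \<sigma>i \<tau> g = (if take (length hv) g = hv then \<sigma>i (drop (length hv - 1) g) else \<tau> g)"

lemma graft_is_strategy:
  assumes "hist_from E v0 hv" "is_strategy E own i (last hv) \<sigma>i" "is_strategy E own i v0 \<tau>"
  shows "is_strategy E own i v0 (graft hv \<sigma>i \<tau>)"
  unfolding is_strategy_def
proof (intro allI impI)
  fix g assume g: "hist_from E v0 g" and og: "own (last g) = i"
  show "(last g, graft hv \<sigma>i \<tau> g) \<in> E"
  proof (cases "take (length hv) g = hv")
    case True
    let ?k = "length hv - 1"
    have hv: "hv \<noteq> []" using assms(1) by (rule hist_from_not_Nil)
    have "length hv \<le> length g" using arg_cong[OF True, of length] by simp
    then have k: "?k < length g" "?k < length hv" using hv by (cases hv; simp)+
    have "hd (drop ?k g) = last hv"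
      using True k hv by (metis hd_drop_conv_nth last_conv_nth nth_take)
    moreover have "is_path E (drop ?k g)" using g k by (simp add: hist_from_def is_path_drop)
    moreover have "last (drop ?k g) = last g" using k by simp
    ultimately show ?thesis
      using assms(2) og True by (auto simp: is_strategy_def hist_from_def graft_def)
  next
    case False
    then show ?thesis using assms(3) g og by (simp add: is_strategy_def graft_def)
  qed
qed

lemma outcome_shift_graft:
  assumes "hv \<noteq> []"
  shows "outcome own (shift (\<sigma>(i := graft hv \<sigma>i (\<sigma> i))) (butlast hv)) (last hv)
       = outcome own ((shift \<sigma> (butlast hv))(i := \<sigma>i)) (last hv)"
proof (rule outcome_cong)
  fix j h assume "h \<noteq> []" "hd h = last hv"
  then obtain t where "h = last hv # t" by (cases h) auto
  then have "butlast hv @ h = hv @ t" using assms by simp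
  then have "take (length hv) (butlast hv @ h) = hv" by simp
  moreover have "drop (length hv - 1) (butlast hv @ h) = h" by simp
  ultimately show "shift (\<sigma>(i := graft hv \<sigma>i (\<sigma> i))) (butlast hv) j h
           = ((shift \<sigma> (butlast hv))(i := \<sigma>i)) j h"
    by (simp add: shift_def graft_def)
qed

lemma eps_SPE_subgame_deviation:
  assumes "game PI V E own mu" "v0 \<in> V" "prefix_independent V E mu"
    and "is_eps_SPE PI E own mu v0 \<epsilon> \<sigma>" "hist_from E v0 hv" "i \<in> PI"
    and "is_strategy E own i (last hv) \<sigma>i"
  shows "mu (outcome own ((shift \<sigma> (butlast hv))(i := \<sigma>i)) (last hv)) i
       \<le> mu (outcome own (shift \<sigma> (butlast hv)) (last hv)) i + \<epsilon>"
proof -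
  let ?\<tau> = "shift \<sigma> (butlast hv)" and ?v = "last hv"
  let ?\<rho> = "outcome own ?\<tau> ?v" and ?\<rho>' = "outcome own (?\<tau>(i := \<sigma>i)) ?v"
  have \<sigma>: "is_profile PI E own v0 \<sigma>" using assms(4) by (simp add: is_eps_SPE_def)
  have \<tau>: "is_profile PI E own ?v ?\<tau>" using is_profile_shift[OF assms(5) \<sigma>] .
  have v: "?v \<in> V" using hist_from_last_in[OF assms(1,2,5)] .
  have "is_strategy E own i v0 (graft hv \<sigma>i (\<sigma> i))"
    using graft_is_strategy[OF assms(5,7)] \<sigma> assms(6) by (simp add: is_profile_def)
  then have "mu (conc (butlast hv) (outcome own (shift (\<sigma>(i := graft hv \<sigma>i (\<sigma> i))) (butlast hv)) ?v)) i
           \<le> mu (conc (butlast hv) ?\<rho>) i + \<epsilon>"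
    using assms(4-6) unfolding is_eps_SPE_def by blast
  then have "mu (conc (butlast hv) ?\<rho>') i \<le> mu (conc (butlast hv) ?\<rho>) i + \<epsilon>"
    by (simp only: outcome_shift_graft[OF hist_from_not_Nil[OF assms(5)]])
  moreover have "is_play E ?\<rho>'"
    using \<tau> assms(7) by (intro outcome_is_play[OF assms(1) v]) (simp add: is_profile_def)
  moreover have "is_play E ?\<rho>" using outcome_is_play[OF assms(1) v \<tau>] .
  ultimately show ?thesis using prefix_independent_butlast[OF assms(3,1,2,5)] by simp
qed

lemma requirement_le_nego:
  assumes "own v \<in> PI"
  shows "lam v \<le> nego PI E own mu lam v"
  unfolding nego_def Let_def
proof (rule INF_greatest)
  fix \<tau> assume "\<tau> \<in> lamRat PI E own mu lam (own v) v"
  then obtain \<sigma>i where \<sigma>i: "is_strategy E own (own v) v \<sigma>i"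
    and consistent: "\<forall>hw. hist_from E v hw \<longrightarrow> compatible_except own (own v) \<tau> hw \<longrightarrow>
           consistent PI own mu lam (outcome own (shift (\<tau>(own v := \<sigma>i)) (butlast hw)) (last hw))"
    unfolding lamRat_def by blast
  have "compatible_except own (own v) \<tau> [v]" by (simp add: compatible_except_def)
  then have "consistent PI own mu lam (outcome own (\<tau>(own v := \<sigma>i)) v)"
    using consistent[rule_format, OF hist_from_singleton] by simp
  then have "lam v \<le> ereal (mu (outcome own (\<tau>(own v := \<sigma>i)) v) (own v))"
    using assms unfolding consistent_def by (metis outcome_0 suffix_0)
  also have "\<dots> \<le> (SUP \<sigma>i\<in>{\<sigma>i. is_strategy E own (own v) v \<sigma>i}.
                      ereal (mu (outcome own (\<tau>(own v := \<sigma>i)) v) (own v)))"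
    using \<sigma>i by (auto intro: SUP_upper)
  finally show "lam v \<le> \<dots>" .
qed

definition SPE_requirement :: "('v \<times> 'v) set \<Rightarrow> ('v \<Rightarrow> 'p) \<Rightarrow> ((nat \<Rightarrow> 'v) \<Rightarrow> 'p \<Rightarrow> real)
    \<Rightarrow> 'v \<Rightarrow> ('p \<Rightarrow> 'v list \<Rightarrow> 'v) \<Rightarrow> 'v \<Rightarrow> ereal" where
  "SPE_requirement E own mu v0 \<sigma> v = (INF hv\<in>{hv. hist_from E v0 hv \<and> last hv = v}.
      ereal (mu (outcome own (shift \<sigma> (butlast hv)) v) (own v)))"

lemma consistent_SPE_requirement:
  assumes "game PI V E own mu" "v0 \<in> V" "is_profile PI E own v0 \<sigma>" "hist_from E v0 hv"
  shows "consistent PI own mu (SPE_requirement E own mu v0 \<sigma>)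
           (outcome own (shift \<sigma> (butlast hv)) (last hv))"
  unfolding consistent_def
proof (intro ballI allI impI)
  fix i n
  let ?\<tau> = "shift \<sigma> (butlast hv)" and ?\<rho> = "outcome own (shift \<sigma> (butlast hv)) (last hv)"
  assume "own (?\<rho> n) = i"
  let ?h = "out_hist own ?\<tau> (last hv) n"
  define hw where "hw = butlast hv @ ?h"
  have "hist_from E (last hv) ?h"
    using out_hist_hist_from[OF assms(1) hist_from_last_in[OF assms(1,2,4)]
        is_profile_shift[OF assms(4,3)]] .
  then have "hist_from E v0 hw" unfolding hw_def by (rule hist_from_append[OF assms(4)])
  moreover have "last hw = ?\<rho> n" by (simp add: hw_def outcome_def)
  moreover have "suffix ?\<rho> n = outcome own (shift \<sigma> (butlast hw)) (last hw)"
    using suffix_outcome[of own ?\<tau> "last hv" n]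
    by (simp add: hw_def butlast_append shift_shift outcome_def)
  ultimately show "SPE_requirement E own mu v0 \<sigma> (?\<rho> n) \<le> ereal (mu (suffix ?\<rho> n) i)"
    using \<open>own (?\<rho> n) = i\<close> unfolding SPE_requirement_def by (auto intro: INF_lower)
qed

lemma nego_SPE_requirement_le:
  assumes "game PI V E own mu" "v0 \<in> V" "prefix_independent V E mu"
    and "is_eps_SPE PI E own mu v0 \<epsilon> \<sigma>" "v \<in> V"
  defines "lam \<equiv> SPE_requirement E own mu v0 \<sigma>"
  shows "nego PI E own mu lam v \<le> lam v + ereal \<epsilon>"
proof -
  let ?i = "own v"
  have \<sigma>: "is_profile PI E own v0 \<sigma>" using assms(4) by (simp add: is_eps_SPE_def)
  have i: "?i \<in> PI" using assms(1,5) by (simp add: game_def)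
  have "nego PI E own mu lam v - ereal \<epsilon>
          \<le> ereal (mu (outcome own (shift \<sigma> (butlast hv)) v) ?i)"
    if hv: "hist_from E v0 hv" "last hv = v" for hv
  proof -
    let ?\<tau> = "shift \<sigma> (butlast hv)"
    have \<tau>: "is_profile PI E own v ?\<tau>" using is_profile_shift[OF hv(1) \<sigma>] hv(2) by simp
    have "consistent PI own mu lam (outcome own (shift (?\<tau>(?i := ?\<tau> ?i)) (butlast hw)) (last hw))"
      if hw: "hist_from E v hw" for hw
    proof -
      have "hist_from E v0 (butlast hv @ hw)" using hist_from_append[OF hv(1)] hw hv(2) by simp
      moreover have "hw \<noteq> []" using hw by (rule hist_from_not_Nil)
      ultimately show ?thesis
        using consistent_SPE_requirement[OF assms(1,2) \<sigma>]
        by (fastforce simp: lam_def shift_shift butlast_append)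
    qed
    then have "?\<tau> \<in> lamRat PI E own mu lam ?i v"
      using \<tau> i unfolding lamRat_def is_profile_def is_profile_except_def by blast
    then have "nego PI E own mu lam v
        \<le> (SUP \<sigma>i\<in>{\<sigma>i. is_strategy E own ?i v \<sigma>i}. ereal (mu (outcome own (?\<tau>(?i := \<sigma>i)) v) ?i))"
      unfolding nego_def Let_def by (rule INF_lower)
    also have "\<dots> \<le> ereal (mu (outcome own ?\<tau> v) ?i) + ereal \<epsilon>"
      using eps_SPE_subgame_deviation[OF assms(1-4) hv(1) i] hv(2)
      by (auto intro!: SUP_least)
    finally show ?thesis by (simp add: ereal_minus_le)
  qed
  then have "nego PI E own mu lam v - ereal \<epsilon> \<le> lam v"
    unfolding lam_def SPE_requirement_def by (auto intro: INF_greatest)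
  then show ?thesis by (simp add: ereal_minus_le)
qed

theorem mainTheorem4:
  fixes PI :: "'p set" and V :: "'v set" and E :: "('v \<times> 'v) set"
    and own :: "'v \<Rightarrow> 'p" and mu :: "(nat \<Rightarrow> 'v) \<Rightarrow> 'p \<Rightarrow> real"
    and v0 :: 'v and \<epsilon> :: real and \<sigma> :: "'p \<Rightarrow> 'v list \<Rightarrow> 'v"
  assumes "game PI V E own mu"
    and "well_initialized V E v0"
    and "prefix_independent V E mu"
    and "\<epsilon> \<ge> 0"
    and "is_eps_SPE PI E own mu v0 \<epsilon> \<sigma>"
  shows "\<exists>lam. eps_fixed_point PI V E own mu \<epsilon> lam \<and>
           (\<forall>hv. hist_from E v0 hv \<longrightarrow>
              consistent PI own mu lam (outcome own (shift \<sigma> (butlast hv)) (last hv)))"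
proof (intro exI conjI allI impI)
  let ?lam = "SPE_requirement E own mu v0 \<sigma>"
  have v0: "v0 \<in> V" using assms(2) by (simp add: well_initialized_def)
  have \<sigma>: "is_profile PI E own v0 \<sigma>" using assms(5) by (simp add: is_eps_SPE_def)
  show "consistent PI own mu ?lam (outcome own (shift \<sigma> (butlast hv)) (last hv))"
    if "hist_from E v0 hv" for hv
    using consistent_SPE_requirement[OF assms(1) v0 \<sigma> that] .
  show "eps_fixed_point PI V E own mu \<epsilon> ?lam"
    unfolding eps_fixed_point_def
  proof (intro ballI conjI)
    fix v assume v: "v \<in> V"
    have "?lam v \<le> nego PI E own mu ?lam v"
      using assms(1) v by (intro requirement_le_nego) (simp add: game_def)
    then show "?lam v - ereal \<epsilon> \<le> nego PI E own mu ?lam v"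
      using assms(4) by (meson ereal_diff_le_mono_left ereal_less_eq(5))
    show "nego PI E own mu ?lam v \<le> ?lam v + ereal \<epsilon>"
      using nego_SPE_requirement_le[OF assms(1) v0 assms(3,5) v] .
  qed
qed

end
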